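(* Let $T$ be an invertible bilateral weighted (forward) shift on $\ell^2(\mathbb{Z})$, i.e. $Te_n=w_ne_{n+1}$ for $n\in\mathbb{Z}$ with weights satisfying $0<\inf_n|w_n|\le\sup_n|w_n|<\infty$, and let $B=T^{-1}$. Let $(n_k)_{k\in\mathbb{N}}$ be an increasing sequence of positive integers, and let $\mathcal{M}$ be the closed subspace of $\ell^2(\mathbb{Z})$ spanned by $\{e_{m_i}:i\in\mathbb{N}\}$ for some integers $m_i$, with $T^{n_k}\mathcal{M}\subseteq\mathcal{M}$ for all $k$. If $T^{n_k}e_{m_i}\to0$ as $k\to\infty$ for some $i$, then $T^{n_k}e_{m_r}\to0$ for all $r\in\mathbb{N}$. If $\|T^{n_k}e_{m_i}\|\,\|B^{n_k}e_{m_j}\|\to0$ as $k\to\infty$ for some $i,j$, then $\|T^{n_k}e_{m_r}\|\,\|B^{n_k}e_{m_p}\|\to0$ for all $r,p\in\mathbb{N}$.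
   Context: $(e_n)_{n\in\mathbb{Z}}$ is the canonical orthonormal basis of $\ell^2(\mathbb{Z})$. *)

theory Defs
  imports "HOL-Analysis.Analysis"
begin

definition ell2 :: "(int \<Rightarrow> complex) set" where
  "ell2 = {x. (\<lambda>n. (norm (x n))\<^sup>2) summable_on UNIV}"

definition l2norm :: "(int \<Rightarrow> complex) \<Rightarrow> real" where
  "l2norm x = sqrt (\<Sum>\<^sub>\<infinity>n. (norm (x n))\<^sup>2)"

definition e :: "int \<Rightarrow> (int \<Rightarrow> complex)" where
  "e n = (\<lambda>k. if k = n then 1 else 0)"

text \<open>Bilateral weighted forward shift: T e_n = w_n e_(n+1).\<close>
definition wshift :: "(int \<Rightarrow> complex) \<Rightarrow> (int \<Rightarrow> complex) \<Rightarrow> (int \<Rightarrow> complex)" where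
  "wshift w x = (\<lambda>k. w (k - 1) * x (k - 1))"

definition lin_span :: "(int \<Rightarrow> complex) set \<Rightarrow> (int \<Rightarrow> complex) set" where
  "lin_span S = {y. \<exists>F c. finite F \<and> F \<subseteq> S \<and> y = (\<lambda>k. \<Sum>v\<in>F. c v * v k)}"

definition closed_span :: "(int \<Rightarrow> complex) set \<Rightarrow> (int \<Rightarrow> complex) set" where
  "closed_span S = {x \<in> ell2. \<forall>\<epsilon>>0. \<exists>y\<in>lin_span S. l2norm (\<lambda>k. x k - y k) < \<epsilon>}"

end

theory Submission
  imports Defs
begin

(* On a basis vector the weighted shift acts diagonally up to a translation:
   T^N e_a = (w_a w_(a+1) ... w_(a+N-1)) e_(a+N), and dually B^N e_a is e_(a-N) divided by
   the product of the N weights just below a.  Hence the orbit norms are the weight products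
   P_N(a) = |w_a| ... |w_(a+N-1)| and 1 / P_N(a-N).  Moving the window by one index changes a
   weight product by the ratio of two weights, i.e. by at most K = sup|w| / inf|w|, so
   P_N(a) <= K^|a-b| P_N(b) with a constant independent of N.  Therefore the orbit norms
   of e_a and e_b (and the products of forward and backward orbit norms) are comparable
   uniformly along any sequence of powers, and convergence to 0 for one pair of indices
   transfers to all.  The argument works for arbitrary integers m_i. *)

text \<open>The scaled basis vector c e_b; the orbits of basis vectors stay of this form.\<close>
definition spike :: "complex \<Rightarrow> int \<Rightarrow> int \<Rightarrow> complex" where
  "spike c b = (\<lambda>k. if k = b then c else 0)"

lemma e_eq_spike: "e b = spike 1 b"
  by (simp add: e_def spike_def)

lemma spike_ell2: "spike c b \<in> ell2"
proof -
  have "(\<lambda>k. (norm (spike c b k))\<^sup>2) summable_on UNIV"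
    by (subst summable_on_cong_neutral[where T="{b}" and g="\<lambda>k. (norm c)\<^sup>2"])
       (auto simp: spike_def)
  then show ?thesis unfolding ell2_def by simp
qed

lemma l2norm_spike: "l2norm (spike c b) = norm c"
proof -
  have "(\<Sum>\<^sub>\<infinity>k. (norm (spike c b k))\<^sup>2) = (\<Sum>\<^sub>\<infinity>k\<in>{b}. (norm c)\<^sup>2)"
    by (rule infsum_cong_neutral) (auto simp: spike_def)
  then show ?thesis unfolding l2norm_def by simp
qed

lemma wshift_spike: "wshift w (spike c b) = spike (c * w b) (b + 1)"
  by (auto simp: wshift_def spike_def fun_eq_iff)

lemma wshift_pow_spike:
  "(wshift w ^^ N) (spike c b) = spike (c * (\<Prod>j<N. w (b + int j))) (b + int N)"
  by (induction N) (simp_all add: wshift_spike algebra_simps)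

lemma inverse_spike:
  assumes inv: "\<forall>x\<in>ell2. B x \<in> ell2 \<and> B (wshift w x) = x \<and> wshift w (B x) = x"
    and nz: "w (b - 1) \<noteq> 0"
  shows "B (spike c b) = spike (c / w (b - 1)) (b - 1)"
proof -
  have "wshift w (spike (c / w (b - 1)) (b - 1)) = spike c b"
    using nz by (simp add: wshift_spike)
  then show ?thesis using inv spike_ell2 by metis
qed

lemma inverse_pow_spike:
  assumes inv: "\<forall>x\<in>ell2. B x \<in> ell2 \<and> B (wshift w x) = x \<and> wshift w (B x) = x"
    and nz: "\<And>j. w j \<noteq> 0"
  shows "(B ^^ N) (spike c b) = spike (c / (\<Prod>j<N. w (b - int N + int j))) (b - int N)"
proof (induction N)
  case 0
  then show ?case by simp
next
  case (Suc N)
  have prod_split: "(\<Prod>j<Suc N. w (b - int (Suc N) + int j))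
      = w (b - int N - 1) * (\<Prod>j<N. w (b - int N + int j))"
    by (subst prod.lessThan_Suc_shift) (simp add: algebra_simps)
  have "(B ^^ Suc N) (spike c b)
      = spike (c / (\<Prod>j<N. w (b - int N + int j)) / w (b - int N - 1)) (b - int N - 1)"
    using Suc inverse_spike[OF inv] nz by simp
  then show ?case unfolding prod_split by (simp add: algebra_simps)
qed

definition weight_prod :: "(int \<Rightarrow> complex) \<Rightarrow> nat \<Rightarrow> int \<Rightarrow> real" where
  "weight_prod w N a = (\<Prod>j<N. norm (w (a + int j)))"

lemma weight_prod_pos: "(\<And>j. w j \<noteq> 0) \<Longrightarrow> 0 < weight_prod w N a"
  unfolding weight_prod_def by (intro prod_pos) auto

lemma weight_prod_slide:
  "weight_prod w N (a + 1) * norm (w a) = weight_prod w N a * norm (w (a + int N))"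
proof -
  have "weight_prod w (Suc N) a = norm (w a) * weight_prod w N (a + 1)"
    unfolding weight_prod_def by (subst prod.lessThan_Suc_shift) (simp add: algebra_simps)
  moreover have "weight_prod w (Suc N) a = weight_prod w N a * norm (w (a + int N))"
    unfolding weight_prod_def by simp
  ultimately show ?thesis by (simp add: algebra_simps)
qed

lemma l2norm_wshift_pow_e: "l2norm ((wshift w ^^ N) (e a)) = weight_prod w N a"
  unfolding e_eq_spike wshift_pow_spike l2norm_spike weight_prod_def
  by (simp add: prod_norm[symmetric])

lemma l2norm_inverse_pow_e:
  assumes inv: "\<forall>x\<in>ell2. B x \<in> ell2 \<and> B (wshift w x) = x \<and> wshift w (B x) = x"
    and nz: "\<And>j. w j \<noteq> 0"
  shows "l2norm ((B ^^ N) (e a)) = 1 / weight_prod w N (a - int N)"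
  unfolding e_eq_spike inverse_pow_spike[OF inv nz] l2norm_spike weight_prod_def
  by (simp add: prod_norm[symmetric] norm_divide)

lemma neighbour_comparison:
  fixes g :: "int \<Rightarrow> real"
  assumes K: "0 \<le> K" and up: "\<And>a. g (a + 1) \<le> K * g a" and down: "\<And>a. g a \<le> K * g (a + 1)"
  shows "g a \<le> K ^ nat \<bar>a - b\<bar> * g b"
proof -
  have right: "g (b + int d) \<le> K ^ d * g b" for d
  proof (induction d)
    case (Suc d)
    have "g (b + int (Suc d)) \<le> K * g (b + int d)"
      using up[of "b + int d"] by (simp add: algebra_simps)
    also have "\<dots> \<le> K * (K ^ d * g b)" using Suc K by (simp add: mult_left_mono)
    finally show ?case by (simp add: algebra_simps)
  qed simp
  have left: "g (b - int d) \<le> K ^ d * g b" for d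
  proof (induction d)
    case (Suc d)
    have "g (b - int (Suc d)) \<le> K * g (b - int d)"
      using down[of "b - int (Suc d)"] by simp
    also have "\<dots> \<le> K * (K ^ d * g b)" using Suc K by (simp add: mult_left_mono)
    finally show ?case by (simp add: algebra_simps)
  qed simp
  show ?thesis
  proof (cases "b \<le> a")
    case True
    then have "a = b + int (nat \<bar>a - b\<bar>)" by simp
    then show ?thesis using right by metis
  next
    case False
    then have "a = b - int (nat \<bar>a - b\<bar>)" by simp
    then show ?thesis using left by metis
  qed
qed

lemma ratio_comparison:
  fixes g u v :: "int \<Rightarrow> real"
  assumes rel: "\<And>a. g (a + 1) * u a = g a * v a"
    and d: "0 < d" and u: "\<And>a. d \<le> u a \<and> u a \<le> M" and v: "\<And>a. d \<le> v a \<and> v a \<le> M"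
    and nonneg: "\<And>a. 0 \<le> g a"
  shows "g a \<le> (M / d) ^ nat \<bar>a - b\<bar> * g b"
proof (rule neighbour_comparison)
  show "0 \<le> M / d" using u[of 0] d by simp
  show "g (a + 1) \<le> M / d * g a" for a
  proof -
    have "g (a + 1) * d \<le> g (a + 1) * u a" using u[of a] nonneg[of "a + 1"] by (simp add: mult_left_mono)
    also have "\<dots> = g a * v a" by (rule rel)
    also have "\<dots> \<le> g a * M" using v[of a] nonneg[of a] by (simp add: mult_left_mono)
    finally show ?thesis using d by (simp add: field_simps)
  qed
  show "g a \<le> M / d * g (a + 1)" for a
  proof -
    have "g a * d \<le> g a * v a" using v[of a] nonneg[of a] by (simp add: mult_left_mono)
    also have "\<dots> = g (a + 1) * u a" by (rule rel[symmetric])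
    also have "\<dots> \<le> g (a + 1) * M" using u[of a] nonneg[of "a + 1"] by (simp add: mult_left_mono)
    finally show ?thesis using d by (simp add: field_simps)
  qed
qed

lemma wshift_orbit_comparable:
  assumes d: "0 < d" and bounds: "\<And>j. d \<le> norm (w j) \<and> norm (w j) \<le> M"
  shows "l2norm ((wshift w ^^ N) (e a)) \<le> (M / d) ^ nat \<bar>a - b\<bar> * l2norm ((wshift w ^^ N) (e b))"
proof -
  have "\<And>j. w j \<noteq> 0" using d bounds by (metis norm_zero not_le)
  then have "0 \<le> weight_prod w N x" for x using weight_prod_pos less_imp_le by blast
  then have "weight_prod w N a \<le> (M / d) ^ nat \<bar>a - b\<bar> * weight_prod w N b"
    using ratio_comparison[where u="\<lambda>x. norm (w x)" and v="\<lambda>x. norm (w (x + int N))"]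
      weight_prod_slide d bounds by blast
  then show ?thesis unfolding l2norm_wshift_pow_e .
qed

lemma inverse_orbit_comparable:
  assumes inv: "\<forall>x\<in>ell2. B x \<in> ell2 \<and> B (wshift w x) = x \<and> wshift w (B x) = x"
    and d: "0 < d" and bounds: "\<And>j. d \<le> norm (w j) \<and> norm (w j) \<le> M"
  shows "l2norm ((B ^^ N) (e a)) \<le> (M / d) ^ nat \<bar>a - b\<bar> * l2norm ((B ^^ N) (e b))"
proof -
  have nz: "\<And>j. w j \<noteq> 0" using d bounds by (metis norm_zero not_le)
  define g where "g x = 1 / weight_prod w N (x - int N)" for x
  have pos: "0 < weight_prod w N x" for x using weight_prod_pos nz by blast
  have "g (x + 1) * norm (w x) = g x * norm (w (x - int N))" for x
  proof -
    have "weight_prod w N (x - int N + 1) * norm (w (x - int N))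
        = weight_prod w N (x - int N) * norm (w x)"
      using weight_prod_slide[of w N "x - int N"] by simp
    then show ?thesis
      using pos[of "x - int N"] pos[of "x - int N + 1"]
      by (simp add: g_def field_simps)
  qed
  moreover have "0 \<le> g x" for x using pos[of "x - int N"] by (simp add: g_def)
  ultimately have "g a \<le> (M / d) ^ nat \<bar>a - b\<bar> * g b"
    using ratio_comparison[where u="\<lambda>x. norm (w x)" and v="\<lambda>x. norm (w (x - int N))"] d bounds
    by blast
  then show ?thesis unfolding g_def l2norm_inverse_pow_e[OF inv nz] .
qed

lemma null_by_comparison:
  fixes f g :: "nat \<Rightarrow> real"
  assumes "\<And>k. 0 \<le> f k" and "\<And>k. f k \<le> C * g k" and "g \<longlonglongrightarrow> 0"
  shows "f \<longlonglongrightarrow> 0"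
proof (rule Lim_null_comparison)
  show "\<forall>\<^sub>F k in sequentially. norm (f k) \<le> C * g k" using assms(1,2) by simp
  show "(\<lambda>k. C * g k) \<longlonglongrightarrow> 0" using tendsto_mult_right_zero[OF assms(3)] .
qed

theorem mainTheorem7:
  fixes w :: "int \<Rightarrow> complex"
    and B :: "(int \<Rightarrow> complex) \<Rightarrow> (int \<Rightarrow> complex)"
    and n :: "nat \<Rightarrow> nat"
    and m :: "nat \<Rightarrow> int"
  assumes weights: "\<exists>a b. 0 < a \<and> (\<forall>j. a \<le> norm (w j) \<and> norm (w j) \<le> b)"
    and B_inv: "\<forall>x\<in>ell2. B x \<in> ell2 \<and> B (wshift w x) = x \<and> wshift w (B x) = x"
    and n_incr: "strict_mono n" and n_pos: "\<forall>k. 0 < n k"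
    and invariant: "\<forall>k. (wshift w ^^ n k) ` closed_span (range (\<lambda>i. e (m i)))
                          \<subseteq> closed_span (range (\<lambda>i. e (m i)))"
  shows "((\<exists>i. (\<lambda>k. l2norm ((wshift w ^^ n k) (e (m i)))) \<longlonglongrightarrow> 0)
           \<longrightarrow> (\<forall>r. (\<lambda>k. l2norm ((wshift w ^^ n k) (e (m r)))) \<longlonglongrightarrow> 0))
         \<and> ((\<exists>i j. (\<lambda>k. l2norm ((wshift w ^^ n k) (e (m i))) * l2norm ((B ^^ n k) (e (m j))))
                   \<longlonglongrightarrow> 0)
           \<longrightarrow> (\<forall>r p. (\<lambda>k. l2norm ((wshift w ^^ n k) (e (m r))) * l2norm ((B ^^ n k) (e (m p))))
                   \<longlonglongrightarrow> 0))"
proof -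
  obtain d M where d: "0 < d" and bounds: "\<And>j. d \<le> norm (w j) \<and> norm (w j) \<le> M"
    using weights by blast
  define K where "K = M / d"
  have K: "0 \<le> K" unfolding K_def using d bounds[of 0] by simp
  note fwd = wshift_orbit_comparable[of d w M, OF d bounds, folded K_def]
  note bwd = inverse_orbit_comparable[of B w d M, OF B_inv d bounds, folded K_def]
  have nonneg: "0 \<le> l2norm x" for x unfolding l2norm_def by (simp add: infsum_nonneg)
  show ?thesis
  proof (intro conjI impI allI)
    fix r assume "\<exists>i. (\<lambda>k. l2norm ((wshift w ^^ n k) (e (m i)))) \<longlonglongrightarrow> 0"
    then obtain i where lim: "(\<lambda>k. l2norm ((wshift w ^^ n k) (e (m i)))) \<longlonglongrightarrow> 0" by blast
    show "(\<lambda>k. l2norm ((wshift w ^^ n k) (e (m r)))) \<longlonglongrightarrow> 0"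
      by (rule null_by_comparison[OF nonneg fwd lim])
  next
    fix r p
    assume "\<exists>i j. (\<lambda>k. l2norm ((wshift w ^^ n k) (e (m i))) * l2norm ((B ^^ n k) (e (m j)))) \<longlonglongrightarrow> 0"
    then obtain i j
      where lim: "(\<lambda>k. l2norm ((wshift w ^^ n k) (e (m i))) * l2norm ((B ^^ n k) (e (m j)))) \<longlonglongrightarrow> 0"
      by blast
    have bound: "l2norm ((wshift w ^^ N) (e (m r))) * l2norm ((B ^^ N) (e (m p)))
        \<le> (K ^ nat \<bar>m r - m i\<bar> * K ^ nat \<bar>m p - m j\<bar>)
           * (l2norm ((wshift w ^^ N) (e (m i))) * l2norm ((B ^^ N) (e (m j))))" for N
      using mult_mono[OF fwd[of N "m r" "m i"] bwd[of N "m p" "m j"]] K nonneg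
      by (simp add: algebra_simps)
    show "(\<lambda>k. l2norm ((wshift w ^^ n k) (e (m r))) * l2norm ((B ^^ n k) (e (m p)))) \<longlonglongrightarrow> 0"
      by (rule null_by_comparison[OF mult_nonneg_nonneg[OF nonneg nonneg] bound lim])
  qed
qed

end
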